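(* Let $k>0$ and fix $\Delta\in\mathbb{N}$. For every integer $n$ with $-\Delta\le n\le -1$, except when $\{n,n+\Delta\}=\{-1,0\}$, there is a curve $\tau\mapsto\gamma_c(\tau)$, $\tau\in(0,1/2]$, of real numbers such that $\Omega_{n,\gamma_c(\tau),\tau}=\Omega_{n+\Delta,\gamma_c(\tau),\tau}$ (the eigenvalues $i\Omega_{n,\gamma,\tau}$ and $i\Omega_{n+\Delta,\gamma,\tau}$ of $\mathcal H_0(\gamma,\tau)$ collide). All such collisions take place away from the origin, except when $\Delta$ is odd and $n=-(\Delta+1)/2$, in which case $n+\Delta=-n-1$ and the eigenvalues $i\Omega_{n,\gamma,\tau}$ and $i\Omega_{-n-1,\gamma,\tau}$ collide at the origin for $\tau=1/2$, $\gamma=\gamma_c(1/2)$.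
   Context: For $k>0$, $\gamma\in\mathbb{R}$, $\tau\in(-1/2,1/2]\setminus\{0\}$ and $n\in\mathbb{Z}$, set $\Omega_{n,\gamma,\tau}=k^3(n+\tau)\big(1-(n+\tau)^2\big)+\frac{3\gamma^2}{k(n+\tau)}$. These satisfy $\mathcal H_0(\gamma,\tau)e^{inz}=i\Omega_{n,\gamma,\tau}e^{inz}$, where $\mathcal H_0(\gamma,\tau)=k^3(\partial_z+i\tau)+k^3(\partial_z+i\tau)^3-\frac{3\gamma^2}{k}(\partial_z+i\tau)^{-1}$ on $2\pi$-periodic square-integrable functions (the zero-amplitude Floquet-Bloch linearized Konopelchenko–Dubrovsky operator), whose spectrum is $\{i\Omega_{n,\gamma,\tau}:n\in\mathbb{Z}\}$. Two eigenvalues "collide" at $\gamma_c$ if $\Omega_{n,\gamma_c,\tau}=\Omega_{m,\gamma_c,\tau}$ for $n\ne m$. *)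

theory Defs
  imports "HOL-Analysis.Analysis"
begin

definition Omega :: "real \<Rightarrow> int \<Rightarrow> real \<Rightarrow> real \<Rightarrow> real" where
  "Omega k n \<gamma> \<tau> = k ^ 3 * (real_of_int n + \<tau>) * (1 - (real_of_int n + \<tau>) ^ 2)
      + 3 * \<gamma> ^ 2 / (k * (real_of_int n + \<tau>))"

end

theory Submission
  imports Defs
begin

text \<open>Writing \<open>a = n + \<tau>\<close> and \<open>b = n + \<Delta> + \<tau>\<close>, clearing denominators turns
  \<open>\<Omega>\<^sub>a = \<Omega>\<^sub>b\<close> into \<open>(a - b) (k\<^sup>4 a b (1 - a\<^sup>2 - a b - b\<^sup>2) - 3 \<gamma>\<^sup>2) = 0\<close>.
  For \<open>a < 0 < b\<close> and \<open>b - a = \<Delta> \<ge> 2\<close> (the excluded pair \<open>{-1, 0}\<close> is the only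
  one with \<open>\<Delta> = 1\<close>) the right-hand side \<open>k\<^sup>4 a b (1 - a\<^sup>2 - a b - b\<^sup>2) / 3\<close>
  is nonnegative, so its square root is a continuous collision curve. At a collision the
  common value is \<open>k\<^sup>3 (a + b) (1 - a\<^sup>2 - b\<^sup>2)\<close> with \<open>a\<^sup>2 + b\<^sup>2 > 1\<close>, so it vanishes only
  when \<open>a + b = 2n + \<Delta> + 2\<tau> = 0\<close>, which for \<open>\<tau> \<in> (0, 1/2]\<close> forces \<open>\<tau> = 1/2\<close> and
  \<open>2n = -(\<Delta> + 1)\<close>.\<close>

definition dispersion :: "real \<Rightarrow> real \<Rightarrow> real \<Rightarrow> real" where
  "dispersion k \<gamma> x = k ^ 3 * x * (1 - x ^ 2) + 3 * \<gamma> ^ 2 / (k * x)"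

lemma Omega_eq_dispersion: "Omega k n \<gamma> \<tau> = dispersion k \<gamma> (of_int n + \<tau>)"
  by (simp add: Omega_def dispersion_def)

definition collision_gamma :: "real \<Rightarrow> real \<Rightarrow> real \<Rightarrow> real" where
  "collision_gamma k a b = sqrt (k ^ 4 * a * b * (1 - a ^ 2 - a * b - b ^ 2) / 3)"

lemma dispersion_eq_iff:
  fixes a b k \<gamma> :: real
  assumes "k \<noteq> 0" "a \<noteq> 0" "b \<noteq> 0" "a \<noteq> b"
  shows "dispersion k \<gamma> a = dispersion k \<gamma> b \<longleftrightarrow>
         \<gamma> ^ 2 = k ^ 4 * a * b * (1 - a ^ 2 - a * b - b ^ 2) / 3"
proof -
  have "(dispersion k \<gamma> a - dispersion k \<gamma> b) * (k * a * b)
      = (a - b) * (k ^ 4 * a * b * (1 - a ^ 2 - a * b - b ^ 2) - 3 * \<gamma> ^ 2)"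
    using assms by (simp add: dispersion_def field_simps power2_eq_square power3_eq_cube
        power4_eq_xxxx)
  moreover have "dispersion k \<gamma> a = dispersion k \<gamma> b \<longleftrightarrow>
      (dispersion k \<gamma> a - dispersion k \<gamma> b) * (k * a * b) = 0"
    using assms by simp
  ultimately show ?thesis
    using assms by auto
qed

lemma dispersion_collision_value:
  fixes a b k \<gamma> :: real
  assumes "k \<noteq> 0" "a \<noteq> 0" "b \<noteq> 0" "a \<noteq> b"
    and "dispersion k \<gamma> a = dispersion k \<gamma> b"
  shows "dispersion k \<gamma> a = k ^ 3 * (a + b) * (1 - a ^ 2 - b ^ 2)"
proof -
  have "\<gamma> ^ 2 = k ^ 4 * a * b * (1 - a ^ 2 - a * b - b ^ 2) / 3"
    using assms dispersion_eq_iff by blast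
  then have "3 * \<gamma> ^ 2 / (k * a) = k ^ 3 * b * (1 - a ^ 2 - a * b - b ^ 2)"
    using assms by (simp add: field_simps power2_eq_square power3_eq_cube power4_eq_xxxx)
  then show ?thesis
    by (simp add: dispersion_def algebra_simps power2_eq_square power3_eq_cube)
qed

lemma one_le_sum_sq_of_gap:
  fixes a b :: real
  assumes "2 \<le> b - a"
  shows "1 \<le> a ^ 2 + a * b + b ^ 2"
proof -
  have "4 \<le> (b - a) ^ 2"
    using power_mono[OF assms, of 2] by simp
  then have "4 \<le> 3 * (a + b) ^ 2 + (b - a) ^ 2"
    by (intro add_increasing) simp_all
  also have "\<dots> = 4 * (a ^ 2 + a * b + b ^ 2)"
    by (simp add: power2_eq_square algebra_simps)
  finally show ?thesis
    by simp
qed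

lemma collision_gamma_sq:
  fixes a b k :: real
  assumes "a * b \<le> 0" "2 \<le> b - a"
  shows "collision_gamma k a b ^ 2 = k ^ 4 * a * b * (1 - a ^ 2 - a * b - b ^ 2) / 3"
proof -
  have "0 \<le> (a * b) * (1 - a ^ 2 - a * b - b ^ 2)"
    using assms one_le_sum_sq_of_gap[OF assms(2)] by (intro mult_nonpos_nonpos) auto
  then show ?thesis
    by (simp add: collision_gamma_def mult.assoc)
qed

lemma dispersion_collision_gamma:
  fixes a b k :: real
  assumes "k \<noteq> 0" "a < 0" "0 < b" "2 \<le> b - a"
  shows "dispersion k (collision_gamma k a b) a = dispersion k (collision_gamma k a b) b"
  using assms collision_gamma_sq[of a b k] dispersion_eq_iff[of k a b]
  by (simp add: mult_nonpos_nonneg)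

lemma dispersion_collision_eq_0_iff:
  fixes a b k \<gamma> :: real
  assumes "k \<noteq> 0" "a < 0" "0 < b" "2 \<le> b - a"
    and "dispersion k \<gamma> a = dispersion k \<gamma> b"
  shows "dispersion k \<gamma> a = 0 \<longleftrightarrow> a + b = 0"
proof -
  have "a * b < 0"
    using assms by (simp add: mult_neg_pos)
  then have "1 < a ^ 2 + b ^ 2"
    using one_le_sum_sq_of_gap[OF assms(4)] by linarith
  then show ?thesis
    using assms dispersion_collision_value[of k a b \<gamma>] by simp
qed

lemma of_int_add_double_eq_0_iff:
  fixes m :: int and \<tau> :: real
  assumes "0 < \<tau>" "\<tau> \<le> 1/2"
  shows "of_int m + 2 * \<tau> = 0 \<longleftrightarrow> m = -1 \<and> \<tau> = 1/2"
proof
  assume sum: "of_int m + 2 * \<tau> = 0"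
  then have "(-1::real) \<le> of_int m" "of_int m < (0::real)"
    using assms by linarith+
  then have "m = -1"
    by linarith
  moreover have "\<tau> = 1/2"
    using sum unfolding \<open>m = -1\<close> by simp
  ultimately show "m = -1 \<and> \<tau> = 1/2" ..
qed auto

lemma shifted_sum_eq_0_iff:
  fixes n :: int and \<Delta> :: nat and \<tau> :: real
  assumes "0 < \<tau>" "\<tau> \<le> 1/2"
  shows "(of_int n + \<tau>) + (of_int (n + int \<Delta>) + \<tau>) = 0 \<longleftrightarrow>
         odd \<Delta> \<and> 2 * n = - (int \<Delta> + 1) \<and> \<tau> = 1/2"
proof -
  have sum: "(of_int n + \<tau>) + (of_int (n + int \<Delta>) + \<tau>) = of_int (2 * n + int \<Delta>) + 2 * \<tau>"
    by simp
  have parity: "2 * n + int \<Delta> = -1 \<longleftrightarrow> odd \<Delta> \<and> 2 * n = - (int \<Delta> + 1)"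
  proof
    assume "2 * n + int \<Delta> = -1"
    then have "int \<Delta> = 2 * (- n - 1) + 1"
      by (simp add: algebra_simps)
    then have "odd (int \<Delta>)"
      by simp
    with \<open>2 * n + int \<Delta> = -1\<close> show "odd \<Delta> \<and> 2 * n = - (int \<Delta> + 1)"
      by simp
  qed linarith
  show ?thesis
    unfolding sum of_int_add_double_eq_0_iff[OF assms] parity by (simp only: conj_assoc)
qed

lemma shifted_pair_bounds:
  fixes n :: int and \<Delta> :: nat and \<tau> :: real
  assumes "2 \<le> \<Delta>" "- int \<Delta> \<le> n" "n \<le> -1" "\<tau> \<in> {0<..1/2}"
  shows "of_int n + \<tau> < 0" "0 < of_int (n + int \<Delta>) + \<tau>"
    "2 \<le> (of_int (n + int \<Delta>) + \<tau>) - (of_int n + \<tau>)"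
  using assms by auto

lemma Omega_collision_gamma:
  fixes k \<tau> :: real and n :: int and \<Delta> :: nat
  assumes "0 < k" "2 \<le> \<Delta>" "- int \<Delta> \<le> n" "n \<le> -1" "\<tau> \<in> {0<..1/2}"
    and "\<gamma> = collision_gamma k (of_int n + \<tau>) (of_int (n + int \<Delta>) + \<tau>)"
  shows "Omega k n \<gamma> \<tau> = Omega k (n + int \<Delta>) \<gamma> \<tau>"
  unfolding Omega_eq_dispersion assms(6)
  using assms(1) shifted_pair_bounds[OF assms(2-5)]
  by (intro dispersion_collision_gamma) auto

lemma Omega_collision_eq_0_iff:
  fixes k \<gamma> \<tau> :: real and n :: int and \<Delta> :: nat
  assumes "0 < k" "2 \<le> \<Delta>" "- int \<Delta> \<le> n" "n \<le> -1" "\<tau> \<in> {0<..1/2}"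
    and "Omega k n \<gamma> \<tau> = Omega k (n + int \<Delta>) \<gamma> \<tau>"
  shows "Omega k n \<gamma> \<tau> = 0 \<longleftrightarrow> odd \<Delta> \<and> 2 * n = - (int \<Delta> + 1) \<and> \<tau> = 1/2"
proof -
  have "Omega k n \<gamma> \<tau> = 0 \<longleftrightarrow> (of_int n + \<tau>) + (of_int (n + int \<Delta>) + \<tau>) = 0"
    using assms(1,6) shifted_pair_bounds[OF assms(2-5)] unfolding Omega_eq_dispersion
    by (intro dispersion_collision_eq_0_iff) auto
  also have "\<dots> \<longleftrightarrow> odd \<Delta> \<and> 2 * n = - (int \<Delta> + 1) \<and> \<tau> = 1/2"
    using assms(5) by (intro shifted_sum_eq_0_iff) auto
  finally show ?thesis .
qed

theorem lemma3p2:
  fixes k :: real and \<Delta> :: nat and n :: int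
  assumes "k > 0"
    and "- int \<Delta> \<le> n" and "n \<le> -1"
    and "\<not> (n = -1 \<and> n + int \<Delta> = 0)"
  shows "(\<exists>\<gamma>c :: real \<Rightarrow> real.
            continuous_on {0<..1/2} \<gamma>c \<and>
            (\<forall>\<tau>\<in>{0<..1/2}. Omega k n (\<gamma>c \<tau>) \<tau> = Omega k (n + int \<Delta>) (\<gamma>c \<tau>) \<tau>) \<and>
            (odd \<Delta> \<and> 2 * n = - (int \<Delta> + 1) \<longrightarrow>
               n + int \<Delta> = - n - 1 \<and>
               Omega k n (\<gamma>c (1/2)) (1/2) = 0 \<and>
               Omega k (n + int \<Delta>) (\<gamma>c (1/2)) (1/2) = 0))
       \<and> (\<forall>\<gamma> :: real. \<forall>\<tau>\<in>{0<..1/2}.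
            Omega k n \<gamma> \<tau> = Omega k (n + int \<Delta>) \<gamma> \<tau> \<and>
            \<not> (odd \<Delta> \<and> 2 * n = - (int \<Delta> + 1) \<and> \<tau> = 1/2)
            \<longrightarrow> Omega k n \<gamma> \<tau> \<noteq> 0)"
proof -
  have \<Delta>: "2 \<le> \<Delta>"
    using assms by linarith
  define \<gamma>c where "\<gamma>c \<tau> = collision_gamma k (of_int n + \<tau>) (of_int (n + int \<Delta>) + \<tau>)" for \<tau>
  have collide: "Omega k n (\<gamma>c \<tau>) \<tau> = Omega k (n + int \<Delta>) (\<gamma>c \<tau>) \<tau>"
    if "\<tau> \<in> {0<..1/2}" for \<tau>
    using assms(1) \<Delta> assms(2,3) that \<gamma>c_def by (rule Omega_collision_gamma)
  note Omega_eq_0_iff = Omega_collision_eq_0_iff[OF assms(1) \<Delta> assms(2,3)]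
  have half: "(1/2::real) \<in> {0<..1/2}"
    by simp
  show ?thesis
  proof (intro conjI exI[of _ \<gamma>c] ballI allI impI)
    show "continuous_on {0<..1/2} \<gamma>c"
      unfolding \<gamma>c_def collision_gamma_def by (intro continuous_intros) auto
  next
    assume parity: "odd \<Delta> \<and> 2 * n = - (int \<Delta> + 1)"
    then show "n + int \<Delta> = - n - 1"
      by linarith
    show "Omega k n (\<gamma>c (1/2)) (1/2) = 0"
      using Omega_eq_0_iff[OF half collide[OF half]] parity by blast
    then show "Omega k (n + int \<Delta>) (\<gamma>c (1/2)) (1/2) = 0"
      using collide[OF half] by simp
  next
    fix \<gamma> \<tau> :: real
    assume "\<tau> \<in> {0<..1/2}"
      and "Omega k n \<gamma> \<tau> = Omega k (n + int \<Delta>) \<gamma> \<tau> \<and>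
        \<not> (odd \<Delta> \<and> 2 * n = - (int \<Delta> + 1) \<and> \<tau> = 1/2)"
    then show "Omega k n \<gamma> \<tau> \<noteq> 0"
      using Omega_eq_0_iff by blast
  qed (rule collide)
qed

end
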